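(* Let $\|\cdot\|$ be any submultiplicative matrix norm on the algebra $M_n(\mathbb C)$ of complex $n\times n$ matrices. For $C\ge1$ and $N\in\mathbb N$ put $r^N_C(x)=C\cdot\max\{\|x\|,\|x^{-1}\|\}^N$, $x\in\mathrm{GL}_n(\mathbb C)$. Then the functions $r^N_C$ majorize all semicharacters on $\mathrm{GL}_n(\mathbb C)$: for every semicharacter $f$ on $\mathrm{GL}_n(\mathbb C)$ there exist $C\ge1$ and $N\in\mathbb N$ with $f(x)\le r^N_C(x)$ for all $x\in\mathrm{GL}_n(\mathbb C)$.
   Context: A semicharacter on a complex Lie group $G$ is a locally bounded function $f:G\to[1,+\infty)$ satisfying $f(xy)\le f(x)f(y)$ for all $x,y\in G$. A matrix norm $\|\cdot\|$ is submultiplicative if $\|xy\|\le\|x\|\,\|y\|$. *)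

theory Defs
  imports "HOL-Analysis.Analysis"
begin

definition submult_matrix_norm :: "(complex^'n^'n \<Rightarrow> real) \<Rightarrow> bool" where
  "submult_matrix_norm nrm \<longleftrightarrow>
     (\<forall>x. 0 \<le> nrm x) \<and>
     (\<forall>x. nrm x = 0 \<longleftrightarrow> x = 0) \<and>
     (\<forall>x y. nrm (x + y) \<le> nrm x + nrm y) \<and>
     (\<forall>c x. nrm (\<chi> i j. c * x $ i $ j) = cmod c * nrm x) \<and>
     (\<forall>x y. nrm (x ** y) \<le> nrm x * nrm y)"

definition GL :: "(complex^'n^'n) set" where
  "GL = {x. invertible x}"

text \<open>A semicharacter on GL_n(C): locally bounded (w.r.t. the subspace topology of GL_n(C)
  in the matrix space), values in [1,+oo), and submultiplicative. Only values on GL_n(C) matter.\<close>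
definition semicharacter_GL :: "(complex^'n^'n \<Rightarrow> real) \<Rightarrow> bool" where
  "semicharacter_GL f \<longleftrightarrow>
     (\<forall>x\<in>GL. 1 \<le> f x) \<and>
     (\<forall>x\<in>GL. \<forall>y\<in>GL. f (x ** y) \<le> f x * f y) \<and>
     (\<forall>x\<in>GL. \<exists>U. open U \<and> x \<in> U \<and> (\<exists>B. \<forall>y\<in>U \<inter> GL. f y \<le> B))"

definition r_fun :: "(complex^'n^'n \<Rightarrow> real) \<Rightarrow> real \<Rightarrow> nat \<Rightarrow> complex^'n^'n \<Rightarrow> real" where
  "r_fun nrm C N x = C * (max (nrm x) (nrm (matrix_inv x))) ^ N"

end

theory Submission
  imports Defs
begin

text \<open>A semicharacter is bounded on compact subsets of \<open>GL\<^sub>n(\<complex>)\<close>, in particular near the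
  identity and on the unitary group. Gram--Schmidt writes \<open>x = Q R\<close> with \<open>Q\<close> unitary and \<open>R\<close>
  triangular, where the entries of \<open>R\<close> and the inverses of its diagonal entries are bounded by
  a multiple of \<open>\<parallel>x\<parallel> + \<parallel>x\<^sup>-\<^sup>1\<parallel>\<close>. Conjugating \<open>R\<close> by \<open>T = diag (\<tau>\<^sup>k)\<close> gives
  \<open>R = T\<^sup>-\<^sup>1 D P T\<close> with \<open>D\<close> the diagonal of \<open>R\<close> and, for \<open>\<tau>\<close> polynomial in the entry bound, \<open>P\<close>
  close to the identity. A diagonal matrix with entries in the annulus \<open>1/L \<le> |z| \<le> L\<close> is the
  \<open>m\<close>-th power, \<open>m \<sim> log L\<close>, of a diagonal matrix near the identity, so the semicharacter
  grows polynomially in \<open>L\<close> on such matrices. Submultiplicativity combines these bounds, and any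
  norm on the matrices dominates the Euclidean one up to a constant.\<close>

lemma one_le_of_one_le_mult:
  fixes a L :: real
  assumes "0 \<le> a" "a \<le> L" "1 \<le> L * a"
  shows "1 \<le> L"
proof (rule ccontr)
  assume "\<not> 1 \<le> L"
  then have "L * a \<le> 1 * a" using assms(1) by (intro mult_right_mono) auto
  with assms \<open>\<not> 1 \<le> L\<close> show False by linarith
qed

lemma norm_Ln_le:
  assumes "cmod z \<le> L" "1 \<le> L * cmod z"
  shows "cmod (Ln z) \<le> ln L + pi"
proof -
  have z: "z \<noteq> 0" using assms(2) by auto
  then have L: "0 < L" using assms(1) by (meson less_le_trans zero_less_norm_iff)
  have "0 \<le> ln (L * cmod z)" using assms(2) by simp
  then have "\<bar>Re (Ln z)\<bar> \<le> ln L"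
    using assms(1) z L ln_mult[of L "cmod z"] by (auto simp: abs_le_iff)
  moreover have "\<bar>Im (Ln z)\<bar> \<le> pi" using Im_Ln_le_pi[OF z] mpi_less_Im_Ln[OF z] by linarith
  ultimately show ?thesis using cmod_le[of "Ln z"] by linarith
qed

lemma Ln_div_root:
  assumes "cmod z \<le> L" "1 \<le> L * cmod z" "0 < m" "(ln L + pi) / \<eta> < real m" "0 < \<eta>"
  shows "cmod (Ln z / of_nat m) < \<eta>" "exp (Ln z / of_nat m) ^ m = z"
proof -
  have "cmod (Ln z / of_nat m) \<le> (ln L + pi) / real m"
    using norm_Ln_le[OF assms(1,2)] assms(3) by (simp add: norm_divide divide_right_mono)
  also have "\<dots> < \<eta>" using assms(3-5) by (simp add: field_simps)
  finally show "cmod (Ln z / of_nat m) < \<eta>" .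
  have "z \<noteq> 0" using assms(2) by auto
  then show "exp (Ln z / of_nat m) ^ m = z"
    using assms(3) by (simp add: exp_divide_power_eq exp_Ln)
qed

text \<open>The identity \<open>B powr (ln L / \<eta>) = L powr (ln B / \<eta>)\<close> turns a bound exponential in
  \<open>ln L\<close> into one polynomial in \<open>L\<close>.\<close>
lemma power_le_powr_mult_power:
  assumes "1 \<le> B" "1 \<le> L" "0 < \<eta>" "real m \<le> (ln L + a) / \<eta>"
  shows "B ^ m \<le> B powr (a / \<eta>) * L ^ nat \<lceil>ln B / \<eta>\<rceil>"
proof -
  have "B ^ m \<le> B powr ((ln L + a) / \<eta>)"
    using assms(1,4) by (auto simp: powr_realpow[symmetric] intro: powr_mono)
  also have "\<dots> = B powr (a / \<eta>) * B powr (ln L / \<eta>)"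
    by (simp add: powr_add[symmetric] add_divide_distrib algebra_simps)
  also have "B powr (ln L / \<eta>) = L powr (ln B / \<eta>)"
    using assms(1,2) by (simp add: powr_def)
  also have "\<dots> \<le> L powr real (nat \<lceil>ln B / \<eta>\<rceil>)"
    using assms(2) by (intro powr_mono) (auto intro: real_nat_ceiling_ge)
  also have "\<dots> = L ^ nat \<lceil>ln B / \<eta>\<rceil>" using assms(2) by (simp add: powr_realpow)
  finally show ?thesis by (simp add: mult_left_mono)
qed

lemma norm_scaling_power_bounds:
  fixes \<tau> :: real
  assumes "1 \<le> \<tau>" "k \<le> n"
  shows "cmod (of_real (\<tau> ^ k) :: complex) \<le> \<tau> ^ n"
    "1 \<le> \<tau> ^ n * cmod (of_real (\<tau> ^ k) :: complex)"
    "cmod (inverse (of_real (\<tau> ^ k)) :: complex) \<le> \<tau> ^ n"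
    "1 \<le> \<tau> ^ n * cmod (inverse (of_real (\<tau> ^ k)) :: complex)"
proof -
  have pow: "1 \<le> \<tau> ^ k" "\<tau> ^ k \<le> \<tau> ^ n" "1 \<le> \<tau> ^ n"
    using assms by (auto intro: one_le_power power_increasing)
  have norm: "cmod (of_real (\<tau> ^ k) :: complex) = \<tau> ^ k"
    using assms(1) by (simp add: norm_power)
  show "cmod (of_real (\<tau> ^ k) :: complex) \<le> \<tau> ^ n" unfolding norm using pow by simp
  have "1 * 1 \<le> \<tau> ^ n * \<tau> ^ k" using pow by (intro mult_mono) auto
  then show "1 \<le> \<tau> ^ n * cmod (of_real (\<tau> ^ k) :: complex)" unfolding norm by simp
  have "inverse (\<tau> ^ k) \<le> 1" using pow by (simp add: inverse_le_1_iff)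
  then show "cmod (inverse (of_real (\<tau> ^ k)) :: complex) \<le> \<tau> ^ n"
    unfolding norm_inverse norm using pow by simp
  show "1 \<le> \<tau> ^ n * cmod (inverse (of_real (\<tau> ^ k)) :: complex)"
    unfolding norm_inverse norm using pow by (simp add: field_simps)
qed

lemma locally_bounded_imp_bounded_on_compact:
  fixes g :: "'a::topological_space \<Rightarrow> real"
  assumes loc: "\<And>x. x \<in> S \<Longrightarrow> \<exists>U. open U \<and> x \<in> U \<and> (\<exists>B. \<forall>y\<in>U \<inter> S. g y \<le> B)"
    and K: "compact K" "K \<subseteq> S"
  shows "\<exists>B. \<forall>x\<in>K. g x \<le> B"
proof -
  have "\<forall>x\<in>S. \<exists>UB. open (fst UB) \<and> x \<in> fst UB \<and> (\<forall>y\<in>fst UB \<inter> S. g y \<le> snd UB)"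
    using loc by fastforce
  then obtain UB where UB: "\<And>x. x \<in> S \<Longrightarrow> open (fst (UB x)) \<and> x \<in> fst (UB x) \<and> (\<forall>y\<in>fst (UB x) \<inter> S. g y \<le> snd (UB x))"
    by (rule bchoice[elim_format]) blast
  define U where "U x = fst (UB x)" for x
  define B where "B x = snd (UB x)" for x
  note UB = UB[folded U_def B_def]
  obtain D where D: "D \<subseteq> K" "finite D" "K \<subseteq> \<Union> (U ` D)"
    using compactE_image[OF K(1), of K U] UB K(2) by blast
  have "g x \<le> (\<Sum>d\<in>D. \<bar>B d\<bar>)" if "x \<in> K" for x
  proof -
    obtain d where d: "d \<in> D" "x \<in> U d" using D \<open>x \<in> K\<close> by blast
    then have "g x \<le> B d" using UB[of d] D K \<open>x \<in> K\<close> by auto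
    also have "\<dots> \<le> \<bar>B d\<bar>" by simp
    also have "\<dots> \<le> (\<Sum>d\<in>D. \<bar>B d\<bar>)" using d D by (intro member_le_sum) auto
    finally show ?thesis .
  qed
  then show ?thesis by blast
qed

section \<open>Norms on matrices\<close>

lemma norm_vec_le_sum_norm: "norm (x :: 'a::real_normed_vector^'n) \<le> (\<Sum>i\<in>UNIV. norm (x$i))"
  unfolding norm_vec_def by (rule L2_set_le_sum) simp

lemma norm_matrix_le_entry_bound:
  fixes A :: "'a::real_normed_vector^'m^'n"
  assumes "\<And>i j. norm (A$i$j) \<le> b"
  shows "norm A \<le> real CARD('n) * real CARD('m) * b"
proof -
  have "norm A \<le> (\<Sum>i\<in>UNIV. norm (A$i))" by (rule norm_vec_le_sum_norm)
  also have "\<dots> \<le> (\<Sum>i\<in>(UNIV::'n set). \<Sum>j\<in>(UNIV::'m set). b)"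
    by (intro sum_mono order_trans[OF norm_vec_le_sum_norm] assms)
  finally show ?thesis by simp
qed

lemma norm_matrix_entry_le: "norm (A $ i $ j) \<le> norm (A :: 'a::real_normed_vector^'m^'n)"
  using Finite_Cartesian_Product.norm_nth_le[of "A $ i" j] Finite_Cartesian_Product.norm_nth_le[of A i]
  by (rule order_trans)

locale norm_like =
  fixes g :: "'a::euclidean_space \<Rightarrow> real"
  assumes triangle: "g (x + y) \<le> g x + g y"
    and scaleR: "g (c *\<^sub>R x) = \<bar>c\<bar> * g x"
    and definite: "g x = 0 \<Longrightarrow> x = 0"
begin

lemma zero [simp]: "g 0 = 0"
  using scaleR[of 0 0] by simp

lemma nonneg: "0 \<le> g x"
  using triangle[of x "-x"] scaleR[of "-1" x] by simp

lemma sum_le: "g (\<Sum>i\<in>S. h i) \<le> (\<Sum>i\<in>S. g (h i))"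
proof (induction S rule: infinite_finite_induct)
  case (insert i S)
  then show ?case using triangle[of "h i" "sum h S"] by simp
qed simp_all

lemma le_norm: "g x \<le> (\<Sum>b\<in>Basis. g b) * norm x"
proof -
  have "g x = g (\<Sum>b\<in>Basis. inner x b *\<^sub>R b)" by (simp add: euclidean_representation)
  also have "\<dots> \<le> (\<Sum>b\<in>Basis. \<bar>inner x b\<bar> * g b)" by (rule order_trans[OF sum_le]) (simp add: scaleR)
  also have "\<dots> \<le> (\<Sum>b\<in>Basis. norm x * g b)"
    by (intro sum_mono mult_right_mono Basis_le_norm nonneg)
  finally show ?thesis by (simp add: sum_distrib_left mult.commute)
qed

lemma continuous_on: "continuous_on S g"
proof -
  have "\<bar>g x - g y\<bar> \<le> (\<Sum>b\<in>Basis. g b) * norm (x - y)" for x y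
  proof -
    have "g x \<le> g (x - y) + g y" "g y \<le> g (x - y) + g x"
      using triangle[of "x - y" y] triangle[of "y - x" x] scaleR[of "-1" "x - y"] by simp_all
    then show ?thesis using le_norm[of "x - y"] by linarith
  qed
  then show ?thesis
    by (intro lipschitz_on_continuous_on[where L="\<Sum>b\<in>Basis. g b"] lipschitz_onI)
       (auto simp: dist_real_def dist_norm intro: sum_nonneg nonneg)
qed

lemma norm_le: obtains c where "c > 0" "\<And>x. norm x \<le> c * g x"
proof -
  obtain z where z: "z \<in> sphere 0 1" "\<And>y. y \<in> sphere 0 1 \<Longrightarrow> g z \<le> g y"
    using continuous_attains_inf[OF compact_sphere _ continuous_on, of 0 1] by auto
  have gz: "g z > 0" using z(1) definite[of z] nonneg[of z] by force
  have "norm x \<le> (1 / g z) * g x" for x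
  proof (cases "x = 0")
    case False
    have "g z \<le> g ((1 / norm x) *\<^sub>R x)" using False by (intro z(2)) simp
    then show ?thesis using False gz by (simp add: scaleR field_simps)
  qed simp
  then show ?thesis using gz that[of "1 / g z"] by simp
qed

end

lemma submult_matrix_norm_norm_like:
  fixes nrm :: "complex^'n^'n \<Rightarrow> real"
  assumes "submult_matrix_norm nrm"
  shows "norm_like nrm"
proof
  show "nrm (x + y) \<le> nrm x + nrm y" "nrm x = 0 \<Longrightarrow> x = 0" for x y
    using assms unfolding submult_matrix_norm_def by blast+
  have "c *\<^sub>R x = (\<chi> i j. complex_of_real c * x $ i $ j)" for c and x :: "complex^'n^'n"
    by (simp add: vec_eq_iff) (simp add: scaleR_conv_of_real)
  then show "nrm (c *\<^sub>R x) = \<bar>c\<bar> * nrm x" for c x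
    using assms unfolding submult_matrix_norm_def by simp
qed

lemma matrix_inv_mult:
  assumes "invertible A"
  shows "matrix_inv A ** A = mat 1" "A ** matrix_inv A = mat 1"
  using assms unfolding invertible_def matrix_inv_def by (auto intro: someI2_ex)

lemma mat_one_neq_zero: "mat 1 \<noteq> (0 :: 'a::zero_neq_one^'n^'n)"
proof
  assume "mat 1 = (0 :: 'a^'n^'n)"
  then have "(mat 1 :: 'a^'n^'n) $ undefined $ undefined = 0" by simp
  then show False by (simp add: mat_def)
qed

lemma submult_matrix_norm_inverse_ge_one:
  fixes nrm :: "complex^'n^'n \<Rightarrow> real"
  assumes "submult_matrix_norm nrm" and "x ** y = mat 1"
  shows "1 \<le> max (nrm x) (nrm y)"
proof -
  interpret norm_like nrm by (rule submult_matrix_norm_norm_like[OF assms(1)])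
  have mult: "nrm (a ** b) \<le> nrm a * nrm b" for a b
    using assms(1) unfolding submult_matrix_norm_def by blast
  have "0 < nrm (mat 1 :: complex^'n^'n)"
    using definite[of "mat 1"] nonneg[of "mat 1"] mat_one_neq_zero by force
  then have "1 \<le> nrm (mat 1 :: complex^'n^'n)"
    using mult[of "mat 1" "mat 1"] by simp
  define M where "M = max (nrm x) (nrm y)"
  have "0 \<le> M" unfolding M_def by (rule max.coboundedI1[OF nonneg])
  note \<open>1 \<le> nrm (mat 1)\<close>
  also have "nrm (mat 1) \<le> nrm x * nrm y" using mult[of x y] assms(2) by simp
  also have "\<dots> \<le> M * M"
    unfolding M_def by (intro mult_mono max.cobounded1 max.cobounded2 max.coboundedI1 nonneg)
  finally show ?thesis
    unfolding M_def[symmetric] using \<open>0 \<le> M\<close> by (intro one_le_of_one_le_mult[of M M]) simp_all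
qed

lemma submult_matrix_norm_dominates:
  fixes nrm :: "complex^'n^'n \<Rightarrow> real"
  assumes "submult_matrix_norm nrm"
  obtains c where "1 \<le> c" "\<And>x. invertible x \<Longrightarrow>
    real CARD('n) * (norm x + norm (matrix_inv x)) + 1 \<le> c * max (nrm x) (nrm (matrix_inv x))"
proof -
  interpret norm_like nrm by (rule submult_matrix_norm_norm_like[OF assms])
  obtain c where c: "0 < c" "\<And>x. norm x \<le> c * nrm x" using norm_le by blast
  have "real CARD('n) * (norm x + norm (matrix_inv x)) + 1
      \<le> (2 * real CARD('n) * c + 1) * max (nrm x) (nrm (matrix_inv x))" if "invertible x" for x
  proof -
    define M where "M = max (nrm x) (nrm (matrix_inv x))"
    have "1 \<le> M"
      unfolding M_def using assms matrix_inv_mult(2)[OF that] by (rule submult_matrix_norm_inverse_ge_one)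
    have norm_le_M: "norm y \<le> c * M" if "nrm y \<le> M" for y
      using c(2)[of y] mult_left_mono[OF that, of c] c(1) by linarith
    have "norm x + norm (matrix_inv x) \<le> 2 * c * M"
      using norm_le_M[of x] norm_le_M[of "matrix_inv x"] unfolding M_def by simp
    then have "real CARD('n) * (norm x + norm (matrix_inv x)) \<le> real CARD('n) * (2 * c * M)"
      by (rule mult_left_mono) simp
    then show ?thesis using \<open>1 \<le> M\<close> unfolding M_def[symmetric] by (simp add: algebra_simps)
  qed
  moreover have "1 \<le> 2 * real CARD('n) * c + 1" using c(1) by simp
  ultimately show ?thesis using that by blast
qed

definition diag_mat :: "('n \<Rightarrow> 'a::zero) \<Rightarrow> 'a^'n^'n" where
  "diag_mat d = (\<chi> i j. if i = j then d i else 0)"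

lemma diag_mat_mult_left_entry:
  fixes M :: "'a::semiring_1^'m^'n"
  shows "(diag_mat a ** M) $ s $ u = a s * M $ s $ u"
proof -
  have "(diag_mat a ** M) $ s $ u = (\<Sum>m\<in>UNIV. (if s = m then a s else 0) * M $ m $ u)"
    unfolding diag_mat_def matrix_matrix_mult_def by simp
  also have "\<dots> = (\<Sum>m\<in>UNIV. if m = s then a s * M $ s $ u else 0)"
    by (intro sum.cong) auto
  finally show ?thesis by simp
qed

lemma diag_mat_mult_right_entry:
  fixes M :: "'a::semiring_1^'m^'n"
  shows "(M ** diag_mat b) $ s $ u = M $ s $ u * b u"
proof -
  have "(M ** diag_mat b) $ s $ u = (\<Sum>m\<in>UNIV. M $ s $ m * (if m = u then b m else 0))"
    unfolding diag_mat_def matrix_matrix_mult_def by simp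
  also have "\<dots> = (\<Sum>m\<in>UNIV. if m = u then M $ s $ u * b u else 0)"
    by (intro sum.cong) auto
  finally show ?thesis by simp
qed

lemma diag_mat_mult: "diag_mat a ** diag_mat b = diag_mat (\<lambda>i. a i * b i :: 'a::semiring_1)"
  by (simp add: vec_eq_iff diag_mat_mult_left_entry) (simp add: diag_mat_def)

lemma diag_mat_one: "diag_mat (\<lambda>_. 1) = mat 1"
  by (simp add: diag_mat_def mat_def)

lemma diag_mat_in_GL: "(\<And>i. d i \<noteq> 0) \<Longrightarrow> diag_mat d \<in> GL"
  unfolding GL_def invertible_def
  by (auto simp: diag_mat_mult diag_mat_one intro!: exI[of _ "diag_mat (\<lambda>i. inverse (d i))"])

lemma mat_one_in_GL: "mat 1 \<in> GL"
  unfolding GL_def invertible_def by (auto intro: exI[of _ "mat 1"])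

lemma mult_in_GL: "x \<in> GL \<Longrightarrow> y \<in> GL \<Longrightarrow> x ** y \<in> GL"
  unfolding GL_def by (auto intro: invertible_mult)

section \<open>Gram--Schmidt and the QR decomposition\<close>

definition cinner :: "complex^'n \<Rightarrow> complex^'n \<Rightarrow> complex" where
  "cinner u v = (\<Sum>i\<in>UNIV. u $ i * cnj (v $ i))"

lemma cinner_diff_left: "cinner (u - v) w = cinner u w - cinner v w"
  unfolding cinner_def by (simp add: sum_subtractf algebra_simps)

lemma cinner_scale_left: "cinner (c *s u) w = c * cinner u w"
  unfolding cinner_def by (simp add: sum_distrib_left algebra_simps)

lemma cinner_scaleR_left: "cinner (r *\<^sub>R u) w = of_real r * cinner u w"
  unfolding cinner_def by (simp add: sum_distrib_left) (simp add: scaleR_conv_of_real algebra_simps)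

lemma cinner_sum_left: "cinner (\<Sum>i\<in>S. u i) w = (\<Sum>i\<in>S. cinner (u i) w)"
  unfolding cinner_def by (simp add: sum_distrib_right sum.swap[of _ S])

lemma cinner_commute: "cinner v u = cnj (cinner u v)"
  unfolding cinner_def by (simp add: mult.commute)

lemma cinner_self: "cinner u u = of_real (norm u ^ 2)"
proof -
  have "cinner u u = (\<Sum>i\<in>UNIV. of_real (cmod (u $ i) ^ 2))"
    unfolding cinner_def by (simp add: complex_norm_square del: of_real_power)
  also have "\<dots> = of_real (norm u ^ 2)"
    by (simp add: norm_vec_def L2_set_def sum_nonneg)
  finally show ?thesis .
qed

lemma norm_cinner_le:
  fixes u v :: "complex^'n"
  assumes "\<And>i. cmod (u $ i) \<le> a" "\<And>i. cmod (v $ i) \<le> b"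
  shows "cmod (cinner u v) \<le> real CARD('n) * a * b"
proof -
  have "cmod (cinner u v) \<le> (\<Sum>i\<in>UNIV. cmod (u $ i * cnj (v $ i)))"
    unfolding cinner_def by (rule norm_sum)
  also have "\<dots> \<le> (\<Sum>i\<in>(UNIV::'n set). a * b)"
  proof (rule sum_mono)
    fix i
    have "0 \<le> a" using norm_ge_zero[of "u $ i"] assms(1)[of i] by linarith
    then show "cmod (u $ i * cnj (v $ i)) \<le> a * b"
      using assms by (simp add: norm_mult mult_mono)
  qed
  finally show ?thesis by simp
qed

function gram_schmidt :: "(nat \<Rightarrow> complex^'n) \<Rightarrow> nat \<Rightarrow> complex^'n" where
  "gram_schmidt c l = sgn (c l - (\<Sum>i<l. cinner (c l) (gram_schmidt c i) *s gram_schmidt c i))"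
  by auto
termination by (relation "Wellfounded.measure snd") auto

declare gram_schmidt.simps [simp del]

definition gram_schmidt_residual :: "(nat \<Rightarrow> complex^'n) \<Rightarrow> nat \<Rightarrow> complex^'n" where
  "gram_schmidt_residual c l = c l - (\<Sum>i<l. cinner (c l) (gram_schmidt c i) *s gram_schmidt c i)"

lemma gram_schmidt_eq_sgn: "gram_schmidt c l = sgn (gram_schmidt_residual c l)"
  unfolding gram_schmidt_residual_def by (rule gram_schmidt.simps)

lemma cinner_gram_schmidt_residual:
  "cinner (gram_schmidt_residual c l) w
     = cinner (c l) w - (\<Sum>i<l. cinner (c l) (gram_schmidt c i) * cinner (gram_schmidt c i) w)"
  unfolding gram_schmidt_residual_def by (simp add: cinner_diff_left cinner_sum_left cinner_scale_left)

lemma cinner_gram_schmidt: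
  "cinner (gram_schmidt c l) w = of_real (1 / norm (gram_schmidt_residual c l)) * cinner (gram_schmidt_residual c l) w"
  by (simp add: gram_schmidt_eq_sgn sgn_div_norm cinner_scaleR_left divide_inverse)

lemma gram_schmidt_orthogonal:
  "(\<And>j. j \<le> l \<Longrightarrow> cinner (c j) w = 0) \<Longrightarrow> cinner (gram_schmidt c l) w = 0"
proof (induction l rule: less_induct)
  case (less l)
  have "cinner (gram_schmidt c i) w = 0" if "i < l" for i
    using that by (intro less.IH[OF that] less.prems) simp
  then show ?case
    unfolding cinner_gram_schmidt[of c l] cinner_gram_schmidt_residual by (simp add: less.prems)
qed

lemma cinner_gram_schmidt_residual_orthogonal:
  "(\<And>j. j < l \<Longrightarrow> cinner (c j) w = 0) \<Longrightarrow> cinner (gram_schmidt_residual c l) w = cinner (c l) w"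
  by (simp add: cinner_gram_schmidt_residual gram_schmidt_orthogonal)

lemma gram_schmidt_orthonormal:
  assumes "\<And>i. i < l \<Longrightarrow> gram_schmidt_residual c i \<noteq> 0"
  shows "i < l \<Longrightarrow> j < l \<Longrightarrow> cinner (gram_schmidt c i) (gram_schmidt c j) = (if i = j then 1 else 0)"
  using assms
proof (induction l arbitrary: i j)
  case (Suc l)
  let ?q = "gram_schmidt c"
  have IH: "cinner (?q i) (?q j) = (if i = j then 1 else 0)" if "i < l" "j < l" for i j
    using Suc.IH Suc.prems(3) that by simp
  have new_unit: "cinner (?q l) (?q l) = 1"
    using Suc.prems(3)[of l] by (simp add: gram_schmidt_eq_sgn cinner_self norm_sgn)
  have new_orth: "cinner (?q l) (?q j) = 0" if "j < l" for j
  proof -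
    have "(\<Sum>i<l. cinner (c l) (?q i) * cinner (?q i) (?q j)) = cinner (c l) (?q j)"
      using that by (simp add: IH if_distrib cong: if_cong)
    then show ?thesis unfolding cinner_gram_schmidt[of c l] cinner_gram_schmidt_residual by simp
  qed
  show ?case
    using Suc.prems(1,2) IH new_unit new_orth[of i] new_orth[of j] cinner_commute[of "?q l" "?q i"]
    by (cases "i = l"; cases "j = l") auto
qed simp

lemma cinner_gram_schmidt_triangular:
  assumes "\<And>m. m \<le> i \<Longrightarrow> gram_schmidt_residual c m \<noteq> 0" and "j \<le> i"
  shows "cinner (c j) (gram_schmidt c i) = (if j = i then of_real (norm (gram_schmidt_residual c j)) else 0)"
proof -
  let ?q = "gram_schmidt c" and ?v = "gram_schmidt_residual c j"
  have orth: "cinner (?q m) (?q i) = (if m = i then 1 else 0)" if "m \<le> i" for m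
    using gram_schmidt_orthonormal[of "Suc i" c m i] assms(1) that by simp
  have "?v = norm ?v *\<^sub>R ?q j"
    by (simp add: gram_schmidt_eq_sgn sgn_div_norm assms)
  have "cinner ?v (?q i) = of_real (norm ?v) * cinner (?q j) (?q i)"
    by (subst \<open>?v = norm ?v *\<^sub>R ?q j\<close>) (rule cinner_scaleR_left)
  then have "cinner (c j) (?q i)
      = of_real (norm ?v) * cinner (?q j) (?q i) + (\<Sum>m<j. cinner (c j) (?q m) * cinner (?q m) (?q i))"
    unfolding cinner_gram_schmidt_residual by (simp add: algebra_simps)
  also have "\<dots> = (if j = i then of_real (norm ?v) else 0)"
    using assms(2) by (simp add: orth)
  finally show ?thesis .
qed

definition conj_transpose :: "complex^'n^'m \<Rightarrow> complex^'m^'n" where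
  "conj_transpose A = (\<chi> i j. cnj (A $ j $ i))"

definition unitary_mat :: "complex^'n^'n \<Rightarrow> bool" where
  "unitary_mat Q \<longleftrightarrow> conj_transpose Q ** Q = mat 1"

lemma conj_transpose_mult_entry:
  "(conj_transpose A ** B) $ s $ t = cinner (column t B) (column s A)"
  unfolding conj_transpose_def matrix_matrix_mult_def cinner_def column_def by (simp add: mult.commute)

lemma unitary_mat_in_GL: "unitary_mat Q \<Longrightarrow> Q \<in> GL"
  unfolding unitary_mat_def GL_def using invertible_left_inverse by blast

lemma unitary_mat_entry_le_one:
  assumes "unitary_mat Q"
  shows "cmod (Q $ r $ s) \<le> 1"
proof -
  have "(conj_transpose Q ** Q) $ s $ s = 1"
    using assms by (simp add: unitary_mat_def mat_def)
  then have "complex_of_real (norm (column s Q) ^ 2) = 1"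
    by (simp only: conj_transpose_mult_entry cinner_self)
  then have "norm (column s Q) = 1 \<or> norm (column s Q) = -1"
    by (simp only: of_real_eq_1_iff power2_eq_1_iff)
  then have "norm (column s Q) = 1"
    using norm_ge_zero[of "column s Q"] by linarith
  then show ?thesis
    using Finite_Cartesian_Product.norm_nth_le[of "column s Q" r] by (simp add: column_def)
qed

lemma compact_unitary_mat: "compact {Q :: complex^'n^'n. unitary_mat Q}"
proof (rule compact_eq_bounded_closed[THEN iffD2], rule conjI)
  show "bounded {Q :: complex^'n^'n. unitary_mat Q}"
    unfolding bounded_iff
    by (intro exI[of _ "real CARD('n) * real CARD('n) * 1"] ballI norm_matrix_le_entry_bound)
       (simp add: unitary_mat_entry_le_one)
  have "{Q :: complex^'n^'n. unitary_mat Q}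
      = {Q. \<forall>s t. (\<Sum>r\<in>UNIV. cnj (Q $ r $ s) * Q $ r $ t) = (mat 1 :: complex^'n^'n) $ s $ t}"
    unfolding unitary_mat_def conj_transpose_def matrix_matrix_mult_def by (auto simp: vec_eq_iff)
  also have "closed \<dots>"
    by (intro closed_Collect_all closed_Collect_eq continuous_intros)
  finally show "closed {Q :: complex^'n^'n. unitary_mat Q}" .
qed

lemma finite_enumeration:
  obtains k and e :: "nat \<Rightarrow> 'a::finite" where
    "\<And>s. k s < CARD('a)" "\<And>s. e (k s) = s" "\<And>i. i < CARD('a) \<Longrightarrow> k (e i) = i"
proof -
  obtain e :: "nat \<Rightarrow> 'a" where e: "bij_betw e {..<CARD('a)} UNIV"
    using ex_bij_betw_nat_finite[of "UNIV :: 'a set"] by (auto simp: atLeast0LessThan)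
  define k where "k = the_inv_into {..<CARD('a)} e"
  show ?thesis
  proof (rule that[of k e])
    show "k s < CARD('a)" "e (k s) = s" for s
      using e the_inv_into_into[of e "{..<CARD('a)}" s "{..<CARD('a)}"] f_the_inv_into_f_bij_betw[OF e]
      unfolding k_def bij_betw_def by auto
    show "k (e i) = i" if "i < CARD('a)" for i
      using e that unfolding k_def bij_betw_def by (simp add: the_inv_into_f_f)
  qed
qed

lemma gram_schmidt_residual_lower_bound:
  fixes c :: "nat \<Rightarrow> complex^'n"
  assumes "\<And>j. j < l \<Longrightarrow> cinner (c j) w = 0" "cinner (c l) w = 1" "\<And>i. cmod (w $ i) \<le> b"
  shows "1 \<le> real CARD('n) * norm (gram_schmidt_residual c l) * b"
proof -
  have "1 = cmod (cinner (gram_schmidt_residual c l) w)"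
    using assms(2) by (subst cinner_gram_schmidt_residual_orthogonal[OF assms(1)]) simp_all
  also have "\<dots> \<le> real CARD('n) * norm (gram_schmidt_residual c l) * b"
    using assms(3) by (intro norm_cinner_le) (simp add: Finite_Cartesian_Product.norm_nth_le)
  finally show ?thesis .
qed

text \<open>The index type carries no order, so \<open>R\<close> is triangular with respect to the enumeration \<open>k\<close>.\<close>
lemma QR_decomposition:
  fixes x :: "complex^'n^'n"
  assumes "invertible x"
  obtains Q R and k :: "'n \<Rightarrow> nat"
  where "unitary_mat Q" "x = Q ** R" "inj k" "\<And>s. k s < CARD('n)"
    "\<And>s t. k t < k s \<Longrightarrow> R $ s $ t = 0"
    "\<And>s. 1 \<le> real CARD('n) * norm (matrix_inv x) * cmod (R $ s $ s)"
    "\<And>s t. cmod (R $ s $ t) \<le> real CARD('n) * norm x"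
proof -
  define n where "n = CARD('n)"
  obtain k and e :: "nat \<Rightarrow> 'n" where k: "\<And>s. k s < n" "\<And>s. e (k s) = s" "\<And>i. i < n \<Longrightarrow> k (e i) = i"
    using finite_enumeration[where 'a='n, folded n_def] by blast
  have "inj k" by (metis k(2) injI)
  \<comment> \<open>Gram--Schmidt runs through the columns of \<open>x\<close> in the order \<open>e\<close>; the rows of
    \<open>matrix_inv x\<close> are dual to them and keep the residuals away from zero.\<close>
  define c where "c l = column (e l) x" for l
  define w where "w l = (\<chi> i. cnj (matrix_inv x $ e l $ i))" for l
  define q where "q = gram_schmidt c"
  have dual: "cinner (c j) (w l) = (if j = l then 1 else 0)" if "j < n" "l < n" for j l
  proof -
    have "e j = e l \<longleftrightarrow> j = l" using k(3) that by metis
    then show ?thesis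
      using matrix_inv_mult(1)[OF assms] unfolding c_def w_def cinner_def column_def
      by (auto simp: vec_eq_iff matrix_matrix_mult_def mat_def mult.commute)
  qed
  have residual_ge: "1 \<le> real n * norm (gram_schmidt_residual c l) * norm (matrix_inv x)" if "l < n" for l
    unfolding n_def using that dual
    by (intro gram_schmidt_residual_lower_bound[where w = "w l"]) (auto simp: w_def n_def norm_matrix_entry_le)
  have residual_nz: "gram_schmidt_residual c l \<noteq> 0" if "l < n" for l
    using residual_ge[OF that] by force
  define Q where "Q = (\<chi> r s. q (k s) $ r)"
  define R where "R = conj_transpose Q ** x"
  have column_Q: "column s Q = q (k s)" for s
    by (simp add: Q_def column_def vec_eq_iff)
  have R_entry: "R $ s $ t = cinner (c (k t)) (q (k s))" for s t
    by (simp add: R_def conj_transpose_mult_entry column_Q c_def k)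
  have "unitary_mat Q"
    using gram_schmidt_orthonormal[of n c] residual_nz k(1) \<open>inj k\<close>
    by (auto simp: unitary_mat_def vec_eq_iff conj_transpose_mult_entry column_Q mat_def q_def inj_eq)
  moreover have "x = Q ** R"
    using \<open>unitary_mat Q\<close> unfolding unitary_mat_def R_def
    by (metis matrix_left_right_inverse matrix_mul_assoc matrix_mul_lid)
  moreover have "R $ s $ t = 0" if "k t < k s" for s t
    using cinner_gram_schmidt_triangular[of "k s" c "k t"] that residual_nz k(1)
    by (auto simp: R_entry q_def order.strict_trans1)
  moreover have "1 \<le> real n * norm (matrix_inv x) * cmod (R $ s $ s)" for s
    using cinner_gram_schmidt_triangular[of "k s" c "k s"] residual_ge[of "k s"] residual_nz k(1)
    by (auto simp: R_entry q_def order.strict_trans1 mult_ac)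
  moreover have "cmod (R $ s $ t) \<le> real n * norm x" for s t
  proof -
    have "cmod (q (k s) $ i) \<le> 1" for i
      using Finite_Cartesian_Product.norm_nth_le[of "q (k s)" i]
      by (simp add: q_def gram_schmidt_eq_sgn norm_sgn split: if_splits)
    then show ?thesis
      using norm_cinner_le[of "c (k t)" "norm x" "q (k s)" 1]
      by (simp add: R_entry c_def column_def norm_matrix_entry_le n_def)
  qed
  ultimately show ?thesis using that \<open>inj k\<close> k(1) unfolding n_def by blast
qed

section \<open>Conjugating triangular matrices by diagonal ones\<close>

lemma diag_mat_conj_factorization:
  fixes R :: "'a::field^'n^'n"
  assumes "\<And>s. d s \<noteq> 0" "\<And>s. g s \<noteq> 0"
  shows "R = diag_mat (\<lambda>s. inverse (g s)) ** diag_mat d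
    ** (diag_mat (\<lambda>s. g s / d s) ** R ** diag_mat (\<lambda>s. inverse (g s))) ** diag_mat g"
proof -
  have left: "diag_mat (\<lambda>s. inverse (g s)) ** diag_mat d ** diag_mat (\<lambda>s. g s / d s) = mat 1"
    and right: "diag_mat (\<lambda>s. inverse (g s)) ** diag_mat g = mat 1"
    using assms by (simp_all add: diag_mat_mult diag_mat_one[symmetric] field_simps)
  have "diag_mat (\<lambda>s. inverse (g s)) ** diag_mat d
      ** (diag_mat (\<lambda>s. g s / d s) ** R ** diag_mat (\<lambda>s. inverse (g s))) ** diag_mat g
    = (diag_mat (\<lambda>s. inverse (g s)) ** diag_mat d ** diag_mat (\<lambda>s. g s / d s)) ** R
      ** (diag_mat (\<lambda>s. inverse (g s)) ** diag_mat g)"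
    by (simp add: matrix_mul_assoc)
  then show ?thesis by (simp add: left right)
qed

text \<open>Conjugating a triangular matrix by \<open>diag (\<tau>^k)\<close> damps every entry above the diagonal
  by a factor \<open>\<tau>\<close>.\<close>
lemma diag_mat_conj_triangular_near_one:
  fixes R :: "complex^'n^'n" and k :: "'n \<Rightarrow> nat"
  assumes "1 \<le> \<tau>" "inj k" "\<And>s t. k t < k s \<Longrightarrow> R $ s $ t = 0"
    and diag: "\<And>s. 1 \<le> K * cmod (R $ s $ s)" and entry: "\<And>s t. cmod (R $ s $ t) \<le> K"
  defines "P \<equiv> diag_mat (\<lambda>s. of_real (\<tau> ^ k s) / R $ s $ s) ** R ** diag_mat (\<lambda>s. inverse (of_real (\<tau> ^ k s)))"
  shows "norm (P - mat 1) \<le> real CARD('n) * real CARD('n) * (K\<^sup>2 / \<tau>)"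
proof (rule norm_matrix_le_entry_bound)
  fix s t
  have P_entry: "P $ s $ t = of_real (\<tau> ^ k s * inverse \<tau> ^ k t) * R $ s $ t / R $ s $ s" for s t
    unfolding P_def by (simp add: diag_mat_mult_left_entry diag_mat_mult_right_entry power_inverse)
  have R_diag: "R $ s $ s \<noteq> 0" for s using diag[of s] by auto
  consider "s = t" | "k t < k s" | "k s < k t"
    using \<open>inj k\<close> by (metis injD linorder_neqE_nat)
  then show "norm ((P - mat 1) $ s $ t) \<le> K\<^sup>2 / \<tau>"
  proof cases
    case 1
    then show ?thesis using \<open>1 \<le> \<tau>\<close> R_diag[of s] by (simp add: P_entry mat_def power_mult_distrib[symmetric])
  next
    case 2
    then have "s \<noteq> t" by auto
    then show ?thesis using 2 assms(1,3) by (simp add: P_entry mat_def)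
  next
    case 3
    have "\<tau> ^ k s * inverse \<tau> ^ k t = inverse \<tau> ^ (k t - k s)"
      using 3 \<open>1 \<le> \<tau>\<close> by (simp add: power_diff_conv_inverse)
    also have "\<dots> \<le> inverse \<tau>"
      using power_decreasing[of 1 "k t - k s" "inverse \<tau>"] 3 \<open>1 \<le> \<tau>\<close> by (simp add: inverse_le_1_iff)
    finally have scale: "\<tau> ^ k s * inverse \<tau> ^ k t \<le> inverse \<tau>" .
    have "inverse (cmod (R $ s $ s)) \<le> K"
      using diag[of s] R_diag[of s] by (simp add: field_simps)
    have "cmod (P $ s $ t) = (\<tau> ^ k s * inverse \<tau> ^ k t) * cmod (R $ s $ t) * inverse (cmod (R $ s $ s))"
      using \<open>1 \<le> \<tau>\<close> by (simp only: P_entry norm_mult norm_divide norm_of_real divide_inverse) (simp add: norm_inverse)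
    also have "\<dots> \<le> inverse \<tau> * K * K"
      using scale entry[of s t] \<open>inverse (cmod (R $ s $ s)) \<le> K\<close> \<open>1 \<le> \<tau>\<close>
        order_trans[OF norm_ge_zero entry[of s t]]
      by (intro mult_mono) auto
    finally have "cmod (P $ s $ t) \<le> inverse \<tau> * K * K" .
    then show ?thesis using 3 by (auto simp: mat_def power2_eq_square field_simps)
  qed
qed

section \<open>Semicharacters\<close>

context
  fixes f :: "complex^'n^'n \<Rightarrow> real"
  assumes semichar: "semicharacter_GL f"
begin

lemma semicharacter_ge_one: "x \<in> GL \<Longrightarrow> 1 \<le> f x"
  using semichar unfolding semicharacter_GL_def by blast

lemma semicharacter_mult: "x \<in> GL \<Longrightarrow> y \<in> GL \<Longrightarrow> f (x ** y) \<le> f x * f y"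
  using semichar unfolding semicharacter_GL_def by blast

lemma semicharacter_mult_le:
  assumes "x \<in> GL" "y \<in> GL" "f x \<le> a" "f y \<le> b"
  shows "f (x ** y) \<le> a * b"
proof -
  have "f (x ** y) \<le> f x * f y" using assms(1,2) by (rule semicharacter_mult)
  also have "\<dots> \<le> a * b"
    using assms(3,4) semicharacter_ge_one[OF assms(1)] semicharacter_ge_one[OF assms(2)]
    by (intro mult_mono) auto
  finally show ?thesis .
qed

lemma semicharacter_locally_bounded:
  "x \<in> GL \<Longrightarrow> \<exists>U. open U \<and> x \<in> U \<and> (\<exists>B. \<forall>y\<in>U \<inter> GL. f y \<le> B)"
  using semichar unfolding semicharacter_GL_def by blast

lemma semicharacter_bounded_on_compact: "compact K \<Longrightarrow> K \<subseteq> GL \<Longrightarrow> \<exists>B. \<forall>x\<in>K. f x \<le> B"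
  by (rule locally_bounded_imp_bounded_on_compact[OF semicharacter_locally_bounded])

lemma semicharacter_bounded_near_one:
  obtains e B where "0 < e" "1 \<le> B" "\<And>y. y \<in> GL \<Longrightarrow> norm (y - mat 1) < e \<Longrightarrow> f y \<le> B"
proof -
  obtain U B where U: "open U" "mat 1 \<in> U" "\<And>y. y \<in> U \<inter> GL \<Longrightarrow> f y \<le> B"
    using semicharacter_locally_bounded[OF mat_one_in_GL] by blast
  obtain e where e: "0 < e" "ball (mat 1) e \<subseteq> U"
    using U(1,2) open_contains_ball by blast
  have "f y \<le> max B 1" if "y \<in> GL" "norm (y - mat 1) < e" for y
  proof -
    have "y \<in> U" using e(2) that(2) by (auto simp: dist_norm norm_minus_commute)
    then show ?thesis using U(3) that(1) by (simp add: le_max_iff_disj)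
  qed
  then show ?thesis using e(1) by (intro that[of e "max B 1"]) auto
qed

lemma semicharacter_diag_power:
  assumes "\<And>i. g i \<noteq> 0"
  shows "f (diag_mat (\<lambda>i. g i ^ Suc m)) \<le> f (diag_mat g) ^ Suc m"
proof (induction m)
  case (Suc m)
  have GL: "diag_mat g \<in> GL" "diag_mat (\<lambda>i. g i ^ Suc m) \<in> GL"
    using assms by (auto intro: diag_mat_in_GL)
  have "f (diag_mat (\<lambda>i. g i ^ Suc (Suc m))) = f (diag_mat g ** diag_mat (\<lambda>i. g i ^ Suc m))"
    by (simp add: diag_mat_mult)
  also have "\<dots> \<le> f (diag_mat g) * f (diag_mat (\<lambda>i. g i ^ Suc m))"
    using GL by (rule semicharacter_mult)
  also have "\<dots> \<le> f (diag_mat g) * f (diag_mat g) ^ Suc m"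
    using Suc.IH semicharacter_ge_one[OF GL(1)] by (intro mult_left_mono) auto
  finally show ?case by simp
qed simp

lemma semicharacter_diag_bound:
  obtains C N where "1 \<le> C"
    "\<And>d L. (\<And>i. cmod (d i) \<le> L) \<Longrightarrow> (\<And>i. 1 \<le> L * cmod (d i)) \<Longrightarrow> f (diag_mat d) \<le> C * L ^ N"
proof -
  obtain e B where e: "0 < e" and B: "1 \<le> B"
    and near_one: "\<And>y. y \<in> GL \<Longrightarrow> norm (y - mat 1) < e \<Longrightarrow> f y \<le> B"
    using semicharacter_bounded_near_one by blast
  define e' where "e' = e / (2 * real CARD('n) ^ 2)"
  have "0 < e'" unfolding e'_def using e by simp
  then obtain \<eta> where \<eta>: "0 < \<eta>" "\<And>z::complex. cmod z < \<eta> \<Longrightarrow> cmod (exp z - 1) < e'"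
    using continuous_at_eps_delta[THEN iffD1, OF isCont_exp[of 0]] by (force simp: dist_norm)
  define C where "C = B powr ((pi + 2 * \<eta>) / \<eta>)"
  define N where "N = nat \<lceil>ln B / \<eta>\<rceil>"
  have "1 \<le> C" unfolding C_def using B \<eta>(1) by (simp add: ge_one_powr_ge_zero)
  moreover have "f (diag_mat d) \<le> C * L ^ N"
    if d_le: "\<And>i. cmod (d i) \<le> L" and d_ge: "\<And>i. 1 \<le> L * cmod (d i)" for d L
  proof -
    have L: "1 \<le> L" by (rule one_le_of_one_le_mult[OF norm_ge_zero d_le d_ge])
    define m where "m = nat \<lceil>(ln L + pi) / \<eta>\<rceil> + 1"
    have m: "0 < m" "(ln L + pi) / \<eta> < real m" unfolding m_def by linarith+
    have "real m \<le> (ln L + pi) / \<eta> + 2"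
      unfolding m_def using L \<eta>(1) pi_gt_zero by (simp add: of_nat_nat) linarith
    also have "\<dots> = (ln L + (pi + 2 * \<eta>)) / \<eta>" using \<eta>(1) by (simp add: field_simps)
    finally have m_le: "real m \<le> (ln L + (pi + 2 * \<eta>)) / \<eta>" .
    define g where "g i = exp (Ln (d i) / of_nat m)" for i
    have g_GL: "diag_mat g \<in> GL" by (rule diag_mat_in_GL) (simp add: g_def)
    have "norm (diag_mat g - mat 1) \<le> real CARD('n) * real CARD('n) * e'"
      using \<eta>(2)[OF Ln_div_root(1)[OF d_le d_ge m \<eta>(1)]] \<open>0 < e'\<close>
      by (intro norm_matrix_le_entry_bound) (auto simp: g_def diag_mat_def mat_def less_imp_le)
    also have "\<dots> < e" unfolding e'_def using e by (simp add: power2_eq_square)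
    finally have "f (diag_mat g) \<le> B" by (rule near_one[OF g_GL])
    have "d = (\<lambda>i. g i ^ Suc (m - 1))"
      using Ln_div_root(2)[OF d_le d_ge m \<eta>(1)] m(1) by (simp add: fun_eq_iff g_def)
    then have "f (diag_mat d) \<le> f (diag_mat g) ^ m"
      using semicharacter_diag_power[of g "m - 1"] m(1) by (simp add: g_def)
    also have "\<dots> \<le> B ^ m"
      using \<open>f (diag_mat g) \<le> B\<close> semicharacter_ge_one[OF g_GL] by (intro power_mono) auto
    also have "\<dots> \<le> C * L ^ N"
      unfolding C_def N_def using B L \<eta>(1) m_le by (rule power_le_powr_mult_power)
    finally show ?thesis .
  qed
  ultimately show ?thesis by (rule that)
qed

lemma semicharacter_triangular_scaled_bound:
  assumes diag_bound:
      "\<And>d L. (\<And>i. cmod (d i) \<le> L) \<Longrightarrow> (\<And>i. 1 \<le> L * cmod (d i)) \<Longrightarrow> f (diag_mat d) \<le> C1 * L ^ N1"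
    and near_one: "\<And>y. y \<in> GL \<Longrightarrow> norm (y - mat 1) < e \<Longrightarrow> f y \<le> B"
    and R: "R \<in> GL" "inj k" "\<And>s. k s < CARD('n)" "\<And>s t. k t < k s \<Longrightarrow> R $ s $ t = 0"
    and R_diag: "\<And>s. 1 \<le> K * cmod (R $ s $ s)" and R_entry: "\<And>s t. cmod (R $ s $ t) \<le> K"
    and \<tau>: "1 \<le> \<tau>" "real CARD('n) * real CARD('n) * (K\<^sup>2 / \<tau>) < e"
  shows "f R \<le> C1 * (\<tau> ^ CARD('n)) ^ N1 * (C1 * K ^ N1) * B * (C1 * (\<tau> ^ CARD('n)) ^ N1)"
proof -
  have R_nz: "R $ s $ s \<noteq> 0" for s using R_diag[of s] by auto
  define g where "g s = complex_of_real (\<tau> ^ k s)" for s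
  define P where "P = diag_mat (\<lambda>s. g s / R $ s $ s) ** R ** diag_mat (\<lambda>s. inverse (g s))"
  have g_nz: "g s \<noteq> 0" for s using \<tau> by (simp add: g_def)
  have R_eq: "R = diag_mat (\<lambda>s. inverse (g s)) ** diag_mat (\<lambda>s. R $ s $ s) ** P ** diag_mat g"
    unfolding P_def using R_nz g_nz by (rule diag_mat_conj_factorization)
  have GL: "diag_mat (\<lambda>s. inverse (g s)) \<in> GL" "diag_mat (\<lambda>s. R $ s $ s) \<in> GL" "P \<in> GL"
      "diag_mat g \<in> GL"
    using R_nz g_nz R(1) unfolding P_def by (auto intro!: diag_mat_in_GL mult_in_GL)
  have "norm (P - mat 1) < e"
    unfolding P_def g_def
    by (rule order.strict_trans1[OF diag_mat_conj_triangular_near_one[OF \<tau>(1) R(2,4) R_diag R_entry] \<tau>(2)])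
  then have "f P \<le> B" using near_one GL(3) by blast
  moreover have "f (diag_mat g) \<le> C1 * (\<tau> ^ CARD('n)) ^ N1"
      "f (diag_mat (\<lambda>s. inverse (g s))) \<le> C1 * (\<tau> ^ CARD('n)) ^ N1"
    unfolding g_def using norm_scaling_power_bounds[OF \<tau>(1) less_imp_le[OF R(3)]]
    by (auto intro!: diag_bound)
  moreover have "f (diag_mat (\<lambda>s. R $ s $ s)) \<le> C1 * K ^ N1" by (intro diag_bound R_entry R_diag)
  ultimately show ?thesis
    using GL by (subst R_eq) (intro semicharacter_mult_le mult_in_GL; assumption)
qed

lemma semicharacter_triangular_bound:
  obtains C N where "1 \<le> C"
    "\<And>R K (k :: 'n \<Rightarrow> nat). R \<in> GL \<Longrightarrow> inj k \<Longrightarrow> (\<And>s. k s < CARD('n))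
      \<Longrightarrow> (\<And>s t. k t < k s \<Longrightarrow> R $ s $ t = 0) \<Longrightarrow> (\<And>s. 1 \<le> K * cmod (R $ s $ s))
      \<Longrightarrow> (\<And>s t. cmod (R $ s $ t) \<le> K) \<Longrightarrow> f R \<le> C * K ^ N"
proof -
  obtain C1 N1 where C1: "1 \<le> C1" and diag_bound:
    "\<And>d L. (\<And>i. cmod (d i) \<le> L) \<Longrightarrow> (\<And>i. 1 \<le> L * cmod (d i)) \<Longrightarrow> f (diag_mat d) \<le> C1 * L ^ N1"
    using semicharacter_diag_bound by blast
  obtain e B where e: "0 < e" and B: "1 \<le> B"
    and near_one: "\<And>y. y \<in> GL \<Longrightarrow> norm (y - mat 1) < e \<Longrightarrow> f y \<le> B"
    using semicharacter_bounded_near_one by blast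
  define n where "n = CARD('n)"
  define a where "a = real n ^ 2 / e + 1"
  define C where "C = C1 ^ 3 * B * a ^ (2 * n * N1)"
  define N where "N = 4 * n * N1 + N1"
  have "1 \<le> a" unfolding a_def using e by simp
  then have "1 * 1 * 1 \<le> C" unfolding C_def using C1 B by (intro mult_mono one_le_power) auto
  then have "1 \<le> C" by simp
  moreover have "f R \<le> C * K ^ N"
    if R: "R \<in> GL" "inj k" "\<And>s. k s < n" "\<And>s t. k t < k s \<Longrightarrow> R $ s $ t = 0"
      and R_diag: "\<And>s. 1 \<le> K * cmod (R $ s $ s)" and R_entry: "\<And>s t. cmod (R $ s $ t) \<le> K"
    for R K and k :: "'n \<Rightarrow> nat"
  proof -
    have K: "1 \<le> K" by (rule one_le_of_one_le_mult[OF norm_ge_zero R_entry R_diag])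
    define \<tau> where "\<tau> = real n ^ 2 * K ^ 2 / e + 1"
    have \<tau>: "1 \<le> \<tau>" "\<tau> \<le> a * K ^ 2"
      using e K unfolding \<tau>_def a_def by (auto simp: field_simps one_le_power)
    have "real n * real n * (K\<^sup>2 / \<tau>) < e"
      using e \<tau>(1) unfolding \<tau>_def by (simp add: field_simps power2_eq_square)
    have "f R \<le> C1 * (\<tau> ^ n) ^ N1 * (C1 * K ^ N1) * B * (C1 * (\<tau> ^ n) ^ N1)"
      using semicharacter_triangular_scaled_bound[OF diag_bound near_one R[unfolded n_def] R_diag R_entry]
        \<tau>(1) \<open>real n * real n * (K\<^sup>2 / \<tau>) < e\<close> unfolding n_def by blast
    also have "\<dots> = C1 ^ 3 * B * ((\<tau> ^ n) ^ N1)\<^sup>2 * K ^ N1"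
      by (simp add: power2_eq_square power3_eq_cube algebra_simps)
    also have "\<dots> \<le> C1 ^ 3 * B * (a ^ (n * N1) * K ^ (2 * n * N1))\<^sup>2 * K ^ N1"
    proof -
      have "(\<tau> ^ n) ^ N1 \<le> ((a * K ^ 2) ^ n) ^ N1" using \<tau> by (intro power_mono) auto
      also have "\<dots> = a ^ (n * N1) * K ^ (2 * n * N1)"
        by (simp add: power_mult_distrib power_mult[symmetric] mult_ac)
      finally show ?thesis using \<tau>(1) C1 B K by (intro mult_right_mono mult_left_mono power_mono) auto
    qed
    also have "\<dots> = C * K ^ N"
      unfolding C_def N_def by (simp add: power_mult_distrib power_add power_mult[symmetric] algebra_simps)
    finally show ?thesis .
  qed
  ultimately show ?thesis using that unfolding n_def by blast
qed

lemma semicharacter_polynomial_bound: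
  obtains C N where "1 \<le> C"
    "\<And>x. x \<in> GL \<Longrightarrow> f x \<le> C * (real CARD('n) * (norm x + norm (matrix_inv x)) + 1) ^ N"
proof -
  obtain C N where C: "1 \<le> C" and triangular_bound:
    "\<And>R K (k :: 'n \<Rightarrow> nat). R \<in> GL \<Longrightarrow> inj k \<Longrightarrow> (\<And>s. k s < CARD('n))
      \<Longrightarrow> (\<And>s t. k t < k s \<Longrightarrow> R $ s $ t = 0) \<Longrightarrow> (\<And>s. 1 \<le> K * cmod (R $ s $ s))
      \<Longrightarrow> (\<And>s t. cmod (R $ s $ t) \<le> K) \<Longrightarrow> f R \<le> C * K ^ N"
    using semicharacter_triangular_bound by blast
  obtain B where B: "\<And>Q. unitary_mat Q \<Longrightarrow> f Q \<le> B"
    using semicharacter_bounded_on_compact[OF compact_unitary_mat] unitary_mat_in_GL by blast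
  have "f x \<le> max 1 (B * C) * (real CARD('n) * (norm x + norm (matrix_inv x)) + 1) ^ N"
    if "x \<in> GL" for x
  proof -
    define K where "K = real CARD('n) * (norm x + norm (matrix_inv x)) + 1"
    obtain Q R and k :: "'n \<Rightarrow> nat" where QR: "unitary_mat Q" "x = Q ** R" "inj k" "\<And>s. k s < CARD('n)"
      "\<And>s t. k t < k s \<Longrightarrow> R $ s $ t = 0"
      "\<And>s. 1 \<le> real CARD('n) * norm (matrix_inv x) * cmod (R $ s $ s)"
      "\<And>s t. cmod (R $ s $ t) \<le> real CARD('n) * norm x"
      using QR_decomposition \<open>x \<in> GL\<close> unfolding GL_def by blast
    have Q_inv: "conj_transpose Q ** Q = mat 1" "Q ** conj_transpose Q = mat 1"
      using QR(1) matrix_left_right_inverse unfolding unitary_mat_def by blast+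
    have "conj_transpose Q ** x = (conj_transpose Q ** Q) ** R"
      unfolding QR(2) by (simp add: matrix_mul_assoc)
    then have "R = conj_transpose Q ** x" by (simp add: Q_inv)
    moreover have "conj_transpose Q \<in> GL"
      unfolding GL_def invertible_def using Q_inv by blast
    ultimately have "R \<in> GL" using \<open>x \<in> GL\<close> by (simp add: mult_in_GL)
    have K: "real CARD('n) * norm x \<le> K" "real CARD('n) * norm (matrix_inv x) \<le> K"
      unfolding K_def by (simp_all add: distrib_left)
    have "1 \<le> K * cmod (R $ s $ s)" for s
      using QR(6)[of s] mult_right_mono[OF K(2) norm_ge_zero[of "R $ s $ s"]] by linarith
    moreover have "cmod (R $ s $ t) \<le> K" for s t
      using QR(7)[of s t] K(1) by linarith
    ultimately have "f R \<le> C * K ^ N"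
      using triangular_bound[OF \<open>R \<in> GL\<close> QR(3,4,5)] by blast
    then have "f x \<le> B * (C * K ^ N)"
      unfolding QR(2) using B[OF QR(1)] unitary_mat_in_GL[OF QR(1)] \<open>R \<in> GL\<close>
      by (intro semicharacter_mult_le)
    also have "\<dots> \<le> max 1 (B * C) * K ^ N"
      unfolding K_def by (simp add: mult.assoc[symmetric] mult_right_mono)
    finally show ?thesis unfolding K_def .
  qed
  then show ?thesis by (intro that[of "max 1 (B * C)" N]) auto
qed

end

theorem mainTheorem5:
  fixes nrm :: "complex^'n^'n \<Rightarrow> real" and f :: "complex^'n^'n \<Rightarrow> real"
  assumes "submult_matrix_norm nrm"
    and "semicharacter_GL f"
  shows "\<exists>C\<ge>1. \<exists>N::nat. \<forall>x\<in>GL. f x \<le> r_fun nrm C N x"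
proof -
  obtain c where c: "1 \<le> c" and dominates: "\<And>x. invertible x \<Longrightarrow>
      real CARD('n) * (norm x + norm (matrix_inv x)) + 1 \<le> c * max (nrm x) (nrm (matrix_inv x))"
    using submult_matrix_norm_dominates[OF assms(1)] by blast
  obtain C N where C: "1 \<le> C"
    and bound: "\<And>x. x \<in> GL \<Longrightarrow> f x \<le> C * (real CARD('n) * (norm x + norm (matrix_inv x)) + 1) ^ N"
    using semicharacter_polynomial_bound[OF assms(2)] by blast
  have "f x \<le> r_fun nrm (C * c ^ N) N x" if "x \<in> GL" for x
  proof -
    have "(real CARD('n) * (norm x + norm (matrix_inv x)) + 1) ^ N
        \<le> (c * max (nrm x) (nrm (matrix_inv x))) ^ N"
      using dominates \<open>x \<in> GL\<close> unfolding GL_def by (intro power_mono) auto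
    then have "C * (real CARD('n) * (norm x + norm (matrix_inv x)) + 1) ^ N
        \<le> C * (c * max (nrm x) (nrm (matrix_inv x))) ^ N"
      using C by (intro mult_left_mono) auto
    then show ?thesis
      using order_trans[OF bound[OF \<open>x \<in> GL\<close>]] by (simp add: r_fun_def power_mult_distrib mult_ac)
  qed
  moreover have "1 * 1 \<le> C * c ^ N" using C c by (intro mult_mono one_le_power) auto
  ultimately show ?thesis by (intro exI[of _ "C * c ^ N"] conjI exI[of _ N] ballI) simp_all
qed

end
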